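(* Let $P$ be a right-LCM monoid and let $P_1$ be a submonoid of $P$ such that the inclusion $P_1\subseteq P$ is closed under factorization and preserves orthogonality. Then $P_1$ respects the LCM of $P$, i.e. for all $x,y\in P_1$, $xP\cap yP=(xP_1\cap yP_1)P$.
   Context: A monoid $P$ is right-LCM if it is left-cancellative and for all $p,q\in P$ either $pP\cap qP=\emptyset$ or $pP\cap qP=rP$ for some $r\in P$. A submonoid $P_1\subseteq P$ is closed under factorization in $P$ if whenever $x,y\in P$ satisfy $xy\in P_1$, then $x,y\in P_1$ (such a $P_1$ is itself right-LCM). For a right-LCM submonoid $P_1$ of $P$, the inclusion preserves orthogonality if for all $x,y\in P_1$: $xP_1\cap yP_1=\emptyset$ if and only if $xP\cap yP=\emptyset$. *)

theory Defs
  imports Main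
begin

text \<open>The monoid P is the whole type 'a of class monoid_mult; subsets of it are submonoids.\<close>

definition rideal :: "'a::monoid_mult \<Rightarrow> 'a set \<Rightarrow> 'a set" where
  "rideal p S = (\<lambda>s. p * s) ` S"

definition setmult :: "'a::monoid_mult set \<Rightarrow> 'a set \<Rightarrow> 'a set" where
  "setmult A B = {a * b | a b. a \<in> A \<and> b \<in> B}"

definition left_cancellative :: "'a::monoid_mult itself \<Rightarrow> bool" where
  "left_cancellative _ \<longleftrightarrow> (\<forall>p x y::'a. p * x = p * y \<longrightarrow> x = y)"

definition right_LCM :: "'a::monoid_mult itself \<Rightarrow> bool" where
  "right_LCM T \<longleftrightarrow> left_cancellative T \<and>
     (\<forall>p q::'a. rideal p UNIV \<inter> rideal q UNIV = {} \<or>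
                (\<exists>r. rideal p UNIV \<inter> rideal q UNIV = rideal r UNIV))"

definition submonoid :: "'a::monoid_mult set \<Rightarrow> bool" where
  "submonoid P1 \<longleftrightarrow> 1 \<in> P1 \<and> (\<forall>x\<in>P1. \<forall>y\<in>P1. x * y \<in> P1)"

definition closed_under_factorization :: "'a::monoid_mult set \<Rightarrow> bool" where
  "closed_under_factorization P1 \<longleftrightarrow> (\<forall>x y. x * y \<in> P1 \<longrightarrow> x \<in> P1 \<and> y \<in> P1)"

definition preserves_orthogonality :: "'a::monoid_mult set \<Rightarrow> bool" where
  "preserves_orthogonality P1 \<longleftrightarrow>
     (\<forall>x\<in>P1. \<forall>y\<in>P1. (rideal x P1 \<inter> rideal y P1 = {}) \<longleftrightarrow> (rideal x UNIV \<inter> rideal y UNIV = {}))"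

end

theory Submission
  imports Defs
begin

text \<open>If \<open>xP \<inter> yP = rP\<close> and \<open>x, y\<close> have a common right multiple \<open>xa = yb\<close> inside \<open>P\<^sub>1\<close>
  (which orthogonality preservation guarantees), then \<open>xa \<in> rP\<close> and closure under factorization
  puts \<open>r\<close>, and then the cofactors of \<open>r\<close> over \<open>x\<close> and \<open>y\<close>, into \<open>P\<^sub>1\<close>. So \<open>r\<close> is already a common
  right multiple within \<open>P\<^sub>1\<close>, and \<open>rP \<subseteq> (xP\<^sub>1 \<inter> yP\<^sub>1)P\<close>.\<close>

lemma mem_rideal_iff: "z \<in> rideal p S \<longleftrightarrow> (\<exists>s\<in>S. z = p * s)"
  unfolding rideal_def by blast

lemma rideal_self: "p \<in> rideal p UNIV"
  unfolding mem_rideal_iff by (metis UNIV_I mult.right_neutral)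

lemma rideal_UNIV_subset_setmult:
  assumes "r \<in> S"
  shows "rideal r UNIV \<subseteq> setmult S UNIV"
  using assms unfolding rideal_def setmult_def by blast

lemma setmult_common_multiples_subset:
  "setmult (rideal x A \<inter> rideal y A) UNIV \<subseteq> rideal x UNIV \<inter> rideal y UNIV"
proof
  fix w assume "w \<in> setmult (rideal x A \<inter> rideal y A) UNIV"
  then obtain z q where "z \<in> rideal x A \<inter> rideal y A" and "w = z * q"
    unfolding setmult_def by blast
  then obtain a b where "w = x * a * q" "w = y * b * q"
    unfolding Int_iff mem_rideal_iff by metis
  then show "w \<in> rideal x UNIV \<inter> rideal y UNIV"
    unfolding Int_iff mem_rideal_iff by (metis UNIV_I mult.assoc)
qed

lemma closed_under_factorizationD:
  assumes "closed_under_factorization P1" and "p * q \<in> P1"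
  shows "p \<in> P1" and "q \<in> P1"
  using assms unfolding closed_under_factorization_def by blast+

lemma submonoidD: "submonoid P1 \<Longrightarrow> p \<in> P1 \<Longrightarrow> q \<in> P1 \<Longrightarrow> p * q \<in> P1"
  unfolding submonoid_def by blast

lemma lcm_mem_common_multiples:
  assumes sub: "submonoid P1" and fact: "closed_under_factorization P1"
    and x: "x \<in> P1"
    and lcm: "rideal x UNIV \<inter> rideal y UNIV = rideal r UNIV"
    and common: "rideal x P1 \<inter> rideal y P1 \<noteq> {}"
  shows "r \<in> rideal x P1 \<inter> rideal y P1"
proof -
  obtain a b where a: "a \<in> P1" and "x * a = y * b"
    using common unfolding rideal_def by blast
  then have "x * a \<in> rideal x UNIV \<inter> rideal y UNIV"
    unfolding Int_iff mem_rideal_iff by blast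
  then have "x * a \<in> rideal r UNIV"
    using lcm by simp
  then obtain c where "r * c \<in> P1"
    using submonoidD[OF sub x a] unfolding Int_iff mem_rideal_iff by auto
  then have r: "r \<in> P1" by (rule closed_under_factorizationD[OF fact])
  have "r \<in> rideal x UNIV \<inter> rideal y UNIV"
    using rideal_self[of r] lcm by simp
  then obtain a' b' where ra: "r = x * a'" and rb: "r = y * b'"
    unfolding Int_iff mem_rideal_iff by blast
  have "a' \<in> P1" "b' \<in> P1"
    using r closed_under_factorizationD(2)[OF fact] ra rb by metis+
  then show ?thesis
    using ra rb unfolding Int_iff mem_rideal_iff by blast
qed

theorem mainTheorem3:
  fixes P1 :: "'a::monoid_mult set"
  assumes "right_LCM TYPE('a)"
    and "submonoid P1"
    and "closed_under_factorization P1"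
    and "preserves_orthogonality P1"
  shows "\<forall>x\<in>P1. \<forall>y\<in>P1.
           rideal x UNIV \<inter> rideal y UNIV = setmult (rideal x P1 \<inter> rideal y P1) UNIV"
proof (intro ballI equalityI)
  fix x y assume x: "x \<in> P1" and y: "y \<in> P1"
  show "setmult (rideal x P1 \<inter> rideal y P1) UNIV \<subseteq> rideal x UNIV \<inter> rideal y UNIV"
    by (rule setmult_common_multiples_subset)
  show "rideal x UNIV \<inter> rideal y UNIV \<subseteq> setmult (rideal x P1 \<inter> rideal y P1) UNIV"
  proof (cases "rideal x UNIV \<inter> rideal y UNIV = {}")
    case False
    then obtain r where lcm: "rideal x UNIV \<inter> rideal y UNIV = rideal r UNIV"
      using assms(1) unfolding right_LCM_def by blast
    have "rideal x P1 \<inter> rideal y P1 \<noteq> {}"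
      using assms(4) x y False unfolding preserves_orthogonality_def by blast
    then have "r \<in> rideal x P1 \<inter> rideal y P1"
      using lcm_mem_common_multiples[OF assms(2,3) x lcm] by blast
    then show ?thesis
      unfolding lcm by (rule rideal_UNIV_subset_setmult)
  qed simp
qed

end
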